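(* Let $p$ be an odd prime and let $\zeta\in\mathbb{Z}_p$ be such that $-\zeta$ is not a square modulo $p$. Let $k\ge0$ and let $A,B,C,A',B',C'\in\mathbb{Z}_p$ with $p^k$ dividing each of $B,C,B',C'$. Suppose that, coefficientwise, $$(x^2+pA+\zeta)^2-p^2(Bx+C)^2\equiv (x^2+pA'+\zeta)^2-p^2(B'x+C')^2\pmod{p^{2k+3}}.$$ Then $A\equiv A'\pmod{p^{2k+2}}$. Consequently $(x^2+pA+\zeta)^2\equiv(x^2+pA'+\zeta)^2\pmod{p^{2k+3}}$. *)

theory Defs
  imports "HOL-Computational_Algebra.Polynomial" "Berlekamp_Zassenhaus.Finite_Field"
begin

text \<open>The p-adic integers Z_p, constructed as the inverse limit of the rings Z/p^n Z:
  an element is a coherent sequence of residues f n in {0..<p^n}. The prime p is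
  encoded as the cardinality of a type parameter (as in mod_ring).\<close>

definition coh :: "int \<Rightarrow> (nat \<Rightarrow> int) \<Rightarrow> bool" where
  "coh m f \<longleftrightarrow> (\<forall>n. f (Suc n) mod m ^ n = f n)"

typedef ('p::finite) padic = "{f. coh (int CARD('p)) f}"
  morphisms rep_padic Abs_padic
  by (rule exI[of _ "\<lambda>n. 0"]) (simp add: coh_def)

setup_lifting type_definition_padic

lemma mod_pow_Suc_mod: "(a::int) mod m ^ Suc n mod m ^ n = a mod m ^ n"
  by (rule mod_mod_cancel) (simp add: le_imp_power_dvd)

lemma coh_mod_self:
  assumes "coh m f" shows "f n mod m ^ n = f n"
proof -
  have e: "f (Suc n) mod m ^ n = f n" using assms by (simp add: coh_def)
  have "f n mod m ^ n = f (Suc n) mod m ^ n mod m ^ n" by (simp only: e)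
  also have "\<dots> = f (Suc n) mod m ^ n" by (rule mod_mod_trivial)
  finally show ?thesis by (simp only: e)
qed

lemma coh_binop:
  assumes "coh m f" "coh m g"
    and op: "\<And>a b c d M. a mod M = c mod M \<Longrightarrow> b mod M = d mod M \<Longrightarrow> h a b mod M = h c d mod M"
  shows "coh m (\<lambda>n. h (f n) (g n) mod m ^ n)"
  unfolding coh_def
proof
  fix n
  have "h (f (Suc n)) (g (Suc n)) mod m ^ n = h (f n) (g n) mod m ^ n"
  proof (rule op)
    show "f (Suc n) mod m ^ n = f n mod m ^ n"
      using assms(1) coh_mod_self[OF assms(1), of n] unfolding coh_def by simp
    show "g (Suc n) mod m ^ n = g n mod m ^ n"
      using assms(2) coh_mod_self[OF assms(2), of n] unfolding coh_def by simp
  qed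
  then show "h (f (Suc n)) (g (Suc n)) mod m ^ Suc n mod m ^ n = h (f n) (g n) mod m ^ n"
    by (simp only: mod_pow_Suc_mod)
qed

lemma coh_uminus:
  assumes "coh m f" shows "coh m (\<lambda>n. (- f n) mod m ^ n)"
proof -
  have "coh m (\<lambda>n. (\<lambda>a b. - a) (f n) (f n) mod m ^ n)"
    by (rule coh_binop[OF assms assms]) (rule mod_minus_cong)
  then show ?thesis by simp
qed

lemma coh_const: "coh m (\<lambda>n. c mod m ^ n)"
  unfolding coh_def by (simp only: mod_pow_Suc_mod simp_thms)

instantiation padic :: (finite) comm_ring
begin

lift_definition zero_padic :: "'a padic" is "\<lambda>n. 0" by (simp add: coh_def)

lift_definition plus_padic :: "'a padic \<Rightarrow> 'a padic \<Rightarrow> 'a padic"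
  is "\<lambda>f g n. (f n + g n) mod (int CARD('a)) ^ n"
  by (auto intro!: coh_binop[where h="(+)"] intro: mod_add_cong)

lift_definition minus_padic :: "'a padic \<Rightarrow> 'a padic \<Rightarrow> 'a padic"
  is "\<lambda>f g n. (f n - g n) mod (int CARD('a)) ^ n"
  by (auto intro!: coh_binop[where h="(-)"] intro: mod_diff_cong)

lift_definition uminus_padic :: "'a padic \<Rightarrow> 'a padic"
  is "\<lambda>f n. (- f n) mod (int CARD('a)) ^ n"
  by (rule coh_uminus)

lift_definition times_padic :: "'a padic \<Rightarrow> 'a padic \<Rightarrow> 'a padic"
  is "\<lambda>f g n. (f n * g n) mod (int CARD('a)) ^ n"
  by (auto intro!: coh_binop[where h="(*)"] intro: mod_mult_cong)

instance
proof
  fix a b c :: "'a padic"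
  show "a + b + c = a + (b + c)"
    by transfer (rule ext, simp add: mod_add_left_eq mod_add_right_eq add.assoc)
  show "a + b = b + a"
    by transfer (rule ext, simp add: add.commute)
  show "0 + a = a"
    by transfer (rule ext, simp add: coh_mod_self)
  show "- a + a = 0"
    by transfer (rule ext, simp add: mod_add_left_eq)
  show "a - b = a + - b"
    by transfer (rule ext, simp add: mod_add_right_eq)
  show "a * b * c = a * (b * c)"
    by transfer (rule ext, simp add: mod_mult_left_eq mod_mult_right_eq mult.assoc)
  show "a * b = b * a"
    by transfer (rule ext, simp add: mult.commute)
  show "(a + b) * c = a * c + b * c"
    by transfer (rule ext, simp add: mod_mult_left_eq mod_add_eq distrib_right)
qed

end

instantiation padic :: (nontriv) comm_ring_1
begin

lift_definition one_padic :: "'a padic" is "\<lambda>n. 1 mod (int CARD('a)) ^ n"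
  by (rule coh_const)

instance
proof
  fix a :: "'a padic"
  show "1 * a = a"
    by transfer (rule ext, simp add: mod_mult_left_eq coh_mod_self)
  have "(0::'a padic) \<noteq> 1"
  proof transfer
    have "int CARD('a) > 1" using nontriv[where ?'a='a] by simp
    then show "(\<lambda>n::nat. 0::int) \<noteq> (\<lambda>n. 1 mod int CARD('a) ^ n)"
      by (auto dest: fun_cong[where x=1])
  qed
  then show "(0::'a padic) \<noteq> 1" .
qed

end

abbreviation pp :: "'p::nontriv padic" where "pp \<equiv> of_nat CARD('p)"

end

theory Submission
  imports Defs
begin

text \<open>Write B = p^k \<beta>, C = p^k \<gamma>, and likewise for the primed data. The coefficient of x^2
  gives A - A' = p^(2k+1) \<delta> with 2\<delta> = \<beta>^2 - \<beta>'^2, the coefficient of x gives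
  \<beta>\<gamma> = \<beta>'\<gamma>', and the constant coefficient gives \<gamma>^2 - \<gamma>'^2 = 2\<zeta>\<delta> = \<zeta>(\<beta>^2 - \<beta>'^2), all
  modulo p. In the extension of the residue field by a square root w of -\<zeta> this says
  (\<gamma> + \<beta>w)^2 = (\<gamma>' + \<beta>'w)^2, so \<beta> = \<plusminus>\<beta>' modulo p, hence p divides 2\<delta> and
  p^(2k+2) divides A - A'. Divisibility by p^n in Z_p is decided on integer representatives
  modulo p^n.\<close>

lemma rep_padic_coh: "coh (int CARD('p)) (rep_padic (x :: 'p::finite padic))"
  using rep_padic by simp

lemma rep_padic_mod_pow_le:
  fixes x :: "'p::finite padic"
  assumes "m \<le> n"
  shows "rep_padic x n mod int CARD('p) ^ m = rep_padic x m"
  using assms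
proof (induction n rule: dec_induct)
  case base
  show ?case by (rule coh_mod_self[OF rep_padic_coh])
next
  case (step n)
  have "rep_padic x (Suc n) mod int CARD('p) ^ m
      = rep_padic x (Suc n) mod int CARD('p) ^ n mod int CARD('p) ^ m"
    using step(1) by (simp add: mod_mod_cancel le_imp_power_dvd)
  also have "rep_padic x (Suc n) mod int CARD('p) ^ n = rep_padic x n"
    using rep_padic_coh[of x] by (simp add: coh_def)
  finally show ?case using step(3) by simp
qed

definition padic_cong :: "nat \<Rightarrow> 'p::nontriv padic \<Rightarrow> int \<Rightarrow> bool" where
  "padic_cong n x X \<longleftrightarrow> rep_padic x n = X mod int CARD('p) ^ n"

lemma padic_cong_rep_padic: "padic_cong n x (rep_padic x n)"
  unfolding padic_cong_def by (rule coh_mod_self[OF rep_padic_coh, symmetric])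

lemma padic_cong_add: "padic_cong n x X \<Longrightarrow> padic_cong n y Y \<Longrightarrow> padic_cong n (x + y) (X + Y)"
  unfolding padic_cong_def plus_padic.rep_eq by (simp add: mod_add_eq)

lemma padic_cong_mult: "padic_cong n x X \<Longrightarrow> padic_cong n y Y \<Longrightarrow> padic_cong n (x * y) (X * Y)"
  unfolding padic_cong_def times_padic.rep_eq by (simp add: mod_mult_eq)

lemma padic_cong_one: "padic_cong n 1 1"
  unfolding padic_cong_def by (simp add: one_padic.rep_eq)

lemma padic_cong_power: "padic_cong n x X \<Longrightarrow> padic_cong n (x ^ m) (X ^ m)"
  by (induction m) (simp_all add: padic_cong_one padic_cong_mult)

lemma padic_cong_of_nat: "padic_cong n (of_nat m) (int m)"
proof (induction m)
  case 0
  show ?case by (simp add: padic_cong_def zero_padic.rep_eq)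
next
  case (Suc m)
  show ?case using padic_cong_add[OF padic_cong_one Suc] by (simp add: add.commute)
qed

lemma coh_shift_div:
  fixes f :: "nat \<Rightarrow> int"
  assumes coh: "coh m f" and "m > 0"
  shows "coh m (\<lambda>j. f (j + n) div m ^ n mod m ^ j)"
  unfolding coh_def
proof
  fix j
  have "f (j + n) = f (Suc (j + n)) mod m ^ (n + j)"
    using coh unfolding coh_def by (simp add: add.commute)
  also have "\<dots> = m ^ n * (f (Suc j + n) div m ^ n mod m ^ j) + f (Suc j + n) mod m ^ n"
    using \<open>m > 0\<close> by (simp add: power_add zmod_zmult2_eq)
  finally have "f (j + n) div m ^ n = f (Suc j + n) div m ^ n mod m ^ j"
    using \<open>m > 0\<close> by simp
  then show "f (Suc j + n) div m ^ n mod m ^ Suc j mod m ^ j = f (j + n) div m ^ n mod m ^ j"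
    by (simp only: mod_pow_Suc_mod mod_mod_trivial)
qed

lemma pp_pow_dvd_iff_rep_padic: "pp ^ n dvd (x :: 'p::nontriv padic) \<longleftrightarrow> rep_padic x n = 0"
proof
  assume "pp ^ n dvd x"
  then obtain y where "x = pp ^ n * y" ..
  then have "padic_cong n x (int CARD('p) ^ n * rep_padic y n)"
    by (simp add: padic_cong_mult padic_cong_power padic_cong_of_nat padic_cong_rep_padic)
  then show "rep_padic x n = 0" by (simp add: padic_cong_def)
next
  assume x: "rep_padic x n = 0"
  let ?m = "int CARD('p)"
  let ?g = "\<lambda>j. rep_padic x (j + n) div ?m ^ n mod ?m ^ j"
  define y :: "'p padic" where "y = Abs_padic ?g"
  have rep_y: "rep_padic y = ?g"
    unfolding y_def by (simp add: Abs_padic_inverse coh_shift_div[OF rep_padic_coh])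
  have "rep_padic x j = rep_padic (pp ^ n * y) j" for j
  proof -
    have "rep_padic x (j + n) mod ?m ^ n = 0"
      using rep_padic_mod_pow_le[of n "j + n" x] x by simp
    then have x_split: "?m ^ n * (rep_padic x (j + n) div ?m ^ n) = rep_padic x (j + n)"
      using mult_div_mod_eq[of "?m ^ n" "rep_padic x (j + n)"] by simp
    have "padic_cong j (pp ^ n * y) (?m ^ n * ?g j)"
      using padic_cong_mult[OF padic_cong_power[OF padic_cong_of_nat] padic_cong_rep_padic[of j y]]
      by (simp add: rep_y)
    then have "rep_padic (pp ^ n * y) j = ?m ^ n * (rep_padic x (j + n) div ?m ^ n) mod ?m ^ j"
      by (simp add: padic_cong_def mod_mult_right_eq)
    also have "\<dots> = rep_padic x j"
      unfolding x_split by (rule rep_padic_mod_pow_le) simp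
    finally show ?thesis ..
  qed
  then have "x = pp ^ n * y" by (simp add: rep_padic_inject[symmetric] fun_eq_iff)
  then show "pp ^ n dvd x" by simp
qed

lemma pp_pow_dvd_iff_padic_cong:
  fixes x :: "'p::nontriv padic"
  assumes "padic_cong N x X" and "n \<le> N"
  shows "pp ^ n dvd x \<longleftrightarrow> int CARD('p) ^ n dvd X"
proof -
  have "rep_padic x n = X mod int CARD('p) ^ N mod int CARD('p) ^ n"
    using assms rep_padic_mod_pow_le[of n N x] by (simp add: padic_cong_def)
  also have "\<dots> = X mod int CARD('p) ^ n"
    using assms(2) by (simp add: mod_mod_cancel le_imp_power_dvd)
  finally show ?thesis by (simp add: pp_pow_dvd_iff_rep_padic dvd_eq_mod_eq_0)
qed

lemma pp_pow_dvd_mult_cancel: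
  fixes x :: "'p::nontriv padic"
  assumes "pp ^ N dvd pp ^ m * x" and "m + n \<le> N"
  shows "pp ^ n dvd x"
proof -
  let ?X = "rep_padic x (m + n)"
  have "pp ^ (m + n) dvd pp ^ m * x"
    using assms by (meson dvd_trans le_imp_power_dvd)
  moreover have "padic_cong (m + n) (pp ^ m * x) (int CARD('p) ^ m * ?X)"
    by (intro padic_cong_mult padic_cong_power padic_cong_of_nat padic_cong_rep_padic)
  ultimately have "int CARD('p) ^ m * int CARD('p) ^ n dvd int CARD('p) ^ m * ?X"
    using pp_pow_dvd_iff_padic_cong by (metis order_refl power_add)
  then have "int CARD('p) ^ n dvd ?X" by simp
  then show ?thesis
    using pp_pow_dvd_iff_padic_cong[OF padic_cong_rep_padic[of "m + n" x], of n] by simp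
qed

lemma pp_pow_dvd_coprime_mult_cancel:
  fixes x :: "'p::nontriv padic"
  assumes "coprime c CARD('p)" and "pp ^ n dvd of_nat c * x"
  shows "pp ^ n dvd x"
proof -
  have "padic_cong n (of_nat c * x) (int c * rep_padic x n)"
    by (intro padic_cong_mult padic_cong_of_nat padic_cong_rep_padic)
  then have "int CARD('p) ^ n dvd int c * rep_padic x n"
    using assms(2) pp_pow_dvd_iff_padic_cong by blast
  moreover have "coprime (int CARD('p) ^ n) (int c)"
    using assms(1) by (simp add: coprime_commute)
  ultimately have "int CARD('p) ^ n dvd rep_padic x n"
    using coprime_dvd_mult_right_iff by blast
  then show ?thesis
    using pp_pow_dvd_iff_padic_cong[OF padic_cong_rep_padic[of n x], of n] by simp
qed

definition residue :: "'p::nontriv padic \<Rightarrow> 'p mod_ring" where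
  "residue x = of_int (rep_padic x 1)"

lemma residue_padic_cong:
  fixes x :: "'p::nontriv padic"
  shows "padic_cong 1 x X \<Longrightarrow> residue x = of_int X"
  using of_int_mod_CHAR[of X, where 'a="'p mod_ring"]
  by (simp add: residue_def padic_cong_def)

interpretation residue: comm_ring_hom "residue :: 'p::nontriv padic \<Rightarrow> 'p mod_ring"
proof unfold_locales
  fix x y :: "'p padic"
  show "residue 0 = 0" by (simp add: residue_def zero_padic.rep_eq)
  show "residue 1 = 1"
    using residue_padic_cong[OF padic_cong_one] by simp
  show "residue (x + y) = residue x + residue y"
    using residue_padic_cong[OF padic_cong_add[OF padic_cong_rep_padic padic_cong_rep_padic]]
    by (simp add: residue_def)
  show "residue (x * y) = residue x * residue y"
    using residue_padic_cong[OF padic_cong_mult[OF padic_cong_rep_padic padic_cong_rep_padic]]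
    by (simp add: residue_def)
qed

lemma residue_eq_0_iff:
  fixes x :: "'p::prime_card padic"
  shows "residue x = 0 \<longleftrightarrow> pp dvd x"
proof -
  have "residue x = 0 \<longleftrightarrow> int CARD('p) dvd rep_padic x 1"
    by (simp add: residue_def of_int_of_int_mod_ring, transfer, simp add: dvd_eq_mod_eq_0)
  then show ?thesis
    using pp_pow_dvd_iff_padic_cong[OF padic_cong_rep_padic[of 1 x], of 1] by simp
qed

lemma residue_nonsquare:
  fixes \<zeta> :: "'p::prime_card padic"
  assumes "\<not> (\<exists>y. pp dvd y ^ 2 - (- \<zeta>))"
  shows "y ^ 2 + residue \<zeta> \<noteq> 0"
proof
  assume "y ^ 2 + residue \<zeta> = 0"
  then have "residue (of_int (to_int_mod_ring y) ^ 2 - (- \<zeta>)) = 0"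
    by (simp add: hom_distribs of_int_of_int_mod_ring)
  then show False
    using assms residue_eq_0_iff by blast
qed

lemma sq_add_nonsquare_mult_sq_eq_0_imp:
  fixes z u v :: "'a::field"
  assumes "\<And>y. y ^ 2 + z \<noteq> 0" and "u ^ 2 + z * v ^ 2 = 0"
  shows "v = 0"
proof (rule ccontr)
  assume "v \<noteq> 0"
  then have "(u / v) ^ 2 + z = (u ^ 2 + z * v ^ 2) / v ^ 2"
    by (simp add: field_simps)
  then show False
    using assms by simp
qed

lemma sq_eq_sq_of_nonsquare:
  fixes z \<beta> \<gamma> \<beta>' \<gamma>' :: "'a::field"
  assumes nonsquare: "\<And>y. y ^ 2 + z \<noteq> 0"
    and norm: "\<gamma> ^ 2 - \<gamma>' ^ 2 = z * (\<beta> ^ 2 - \<beta>' ^ 2)" and prod: "\<beta> * \<gamma> = \<beta>' * \<gamma>'"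
  shows "\<beta> ^ 2 = \<beta>' ^ 2"
proof (rule ccontr)
  assume ne: "\<beta> ^ 2 \<noteq> \<beta>' ^ 2"
  have "(\<beta>' ^ 2 - \<beta> ^ 2) * (\<gamma>' ^ 2 + z * \<beta> ^ 2)
      = \<beta> ^ 2 * ((\<gamma> ^ 2 - \<gamma>' ^ 2) - z * (\<beta> ^ 2 - \<beta>' ^ 2))
        - (\<beta> * \<gamma> - \<beta>' * \<gamma>') * (\<beta> * \<gamma> + \<beta>' * \<gamma>')"
    "(\<beta> ^ 2 - \<beta>' ^ 2) * (\<gamma> ^ 2 + z * \<beta>' ^ 2)
      = \<beta>' ^ 2 * (z * (\<beta> ^ 2 - \<beta>' ^ 2) - (\<gamma> ^ 2 - \<gamma>' ^ 2))
        - (\<beta>' * \<gamma>' - \<beta> * \<gamma>) * (\<beta>' * \<gamma>' + \<beta> * \<gamma>)"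
    by (simp_all add: algebra_simps power2_eq_square)
  then have "\<gamma>' ^ 2 + z * \<beta> ^ 2 = 0" "\<gamma> ^ 2 + z * \<beta>' ^ 2 = 0"
    using ne norm prod by auto
  then have "\<beta> = 0" "\<beta>' = 0"
    using sq_add_nonsquare_mult_sq_eq_0_imp[OF nonsquare] by blast+
  then show False
    using ne by simp
qed

lemma pp_pow_dvd_two_mult_cancel:
  fixes x :: "'p::nontriv padic"
  assumes "odd CARD('p)" and "pp ^ n dvd 2 * x"
  shows "pp ^ n dvd x"
proof -
  have "coprime 2 CARD('p)"
    using assms(1) by simp
  then show ?thesis
    using pp_pow_dvd_coprime_mult_cancel[of 2, unfolded of_nat_numeral] assms(2) by blast
qed

lemma pp_pow_double_add: "pp ^ (2 * k + j) = pp ^ j * pp ^ k * pp ^ k"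
  by (simp only: power_add mult_2) (simp add: ac_simps)

lemma coeff2_congruenceE:
  fixes A A' \<zeta> \<beta> \<beta>' :: "'p::prime_card padic"
  assumes odd: "odd CARD('p)"
    and h2: "pp ^ (2*k+3) dvd
      (2*(pp*A + \<zeta>) - pp^2*(pp^k*\<beta>)^2) - (2*(pp*A' + \<zeta>) - pp^2*(pp^k*\<beta>')^2)"
  obtains \<delta> where "A - A' = pp ^ (2*k+1) * \<delta>" and "pp dvd 2*\<delta> - (\<beta>^2 - \<beta>'^2)"
proof -
  \<comment> \<open>Ring identities are proved for arbitrary p and P = p^k and then instantiated:
    the simplifier is very slow on the coercion hidden in pp.\<close>
  have "(2*(p*A + \<zeta>) - p^2*(P*\<beta>)^2) - (2*(p*A' + \<zeta>) - p^2*(P*\<beta>')^2)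
      = p ^ 1 * (2*(A - A') - p^1*P*P*(\<beta>^2 - \<beta>'^2))" for p P :: "'p padic"
    by (simp add: algebra_simps power2_eq_square)
  then have e2: "(2*(pp*A + \<zeta>) - pp^2*(pp^k*\<beta>)^2) - (2*(pp*A' + \<zeta>) - pp^2*(pp^k*\<beta>')^2)
      = pp ^ 1 * (2*(A - A') - pp^(2*k+1)*(\<beta>^2 - \<beta>'^2))"
    unfolding pp_pow_double_add .
  have x2: "pp ^ (2*k+2) dvd 2*(A - A') - pp^(2*k+1)*(\<beta>^2 - \<beta>'^2)"
    by (rule pp_pow_dvd_mult_cancel[OF h2[unfolded e2]]) simp
  have "pp ^ (2*k+1) dvd pp ^ (2*k+2)"
    by (rule le_imp_power_dvd) simp
  then have "pp ^ (2*k+1) dvd 2*(A - A') - pp^(2*k+1)*(\<beta>^2 - \<beta>'^2)"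
    using x2 by (rule dvd_trans)
  from dvd_add[OF this dvd_triv_left[of "pp^(2*k+1)" "\<beta>^2 - \<beta>'^2"]]
  have "pp ^ (2*k+1) dvd 2*(A - A')"
    by (simp only: diff_add_cancel)
  then obtain \<delta> where \<delta>: "A - A' = pp ^ (2*k+1) * \<delta>"
    using pp_pow_dvd_two_mult_cancel[OF odd] by (metis dvdE)
  have e2': "2*(A - A') - pp^(2*k+1)*(\<beta>^2 - \<beta>'^2) = pp^(2*k+1) * (2*\<delta> - (\<beta>^2 - \<beta>'^2))"
    unfolding \<delta> by (simp add: algebra_simps)
  have "pp dvd 2*\<delta> - (\<beta>^2 - \<beta>'^2)"
    by (rule pp_pow_dvd_mult_cancel[where n = 1, OF x2[unfolded e2'], unfolded power_one_right]) simp
  with \<delta> show ?thesis ..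
qed

lemma coeff1_congruence_imp:
  fixes \<beta> \<gamma> \<beta>' \<gamma>' :: "'p::prime_card padic"
  assumes odd: "odd CARD('p)"
    and h1: "pp ^ (2*k+3) dvd pp^2*(2*(pp^k*\<gamma>)*(pp^k*\<beta>)) - pp^2*(2*(pp^k*\<gamma>')*(pp^k*\<beta>'))"
  shows "pp dvd \<beta>*\<gamma> - \<beta>'*\<gamma>'"
proof -
  have "p^2*(2*(P*\<gamma>)*(P*\<beta>)) - p^2*(2*(P*\<gamma>')*(P*\<beta>'))
      = p^2*P*P * (2*(\<beta>*\<gamma> - \<beta>'*\<gamma>'))" for p P :: "'p padic"
    by (simp add: algebra_simps power2_eq_square)
  then have e1: "pp^2*(2*(pp^k*\<gamma>)*(pp^k*\<beta>)) - pp^2*(2*(pp^k*\<gamma>')*(pp^k*\<beta>'))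
      = pp ^ (2*k+2) * (2*(\<beta>*\<gamma> - \<beta>'*\<gamma>'))"
    unfolding pp_pow_double_add .
  have "pp dvd 2*(\<beta>*\<gamma> - \<beta>'*\<gamma>')"
    by (rule pp_pow_dvd_mult_cancel[where n = 1, OF h1[unfolded e1], unfolded power_one_right]) simp
  then show ?thesis
    by (rule pp_pow_dvd_two_mult_cancel[OF odd, where n = 1, unfolded power_one_right])
qed

lemma coeff0_congruence_imp:
  fixes A A' \<zeta> \<gamma> \<gamma>' \<delta> :: "'p::prime_card padic"
  assumes \<delta>: "A - A' = pp ^ (2*k+1) * \<delta>"
    and h0: "pp ^ (2*k+3) dvd
      ((pp*A + \<zeta>)^2 - pp^2*(pp^k*\<gamma>)^2) - ((pp*A' + \<zeta>)^2 - pp^2*(pp^k*\<gamma>')^2)"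
  shows "pp dvd \<delta>*(pp*(A + A') + 2*\<zeta>) - (\<gamma>^2 - \<gamma>'^2)"
proof -
  have "((p*A + \<zeta>)^2 - p^2*(P*\<gamma>)^2) - ((p*A' + \<zeta>)^2 - p^2*(P*\<gamma>')^2)
      = p^2*P*P * (\<delta>*(p*(A + A') + 2*\<zeta>) - (\<gamma>^2 - \<gamma>'^2))"
    if "A = p^1*P*P*\<delta> + A'" for p P :: "'p padic"
    unfolding that by (simp add: algebra_simps power2_eq_square)
  moreover have "A = pp^1*pp^k*pp^k*\<delta> + A'"
    using \<delta>[unfolded pp_pow_double_add] by (simp only: diff_eq_eq)
  ultimately have e0: "((pp*A + \<zeta>)^2 - pp^2*(pp^k*\<gamma>)^2) - ((pp*A' + \<zeta>)^2 - pp^2*(pp^k*\<gamma>')^2)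
      = pp ^ (2*k+2) * (\<delta>*(pp*(A + A') + 2*\<zeta>) - (\<gamma>^2 - \<gamma>'^2))"
    unfolding pp_pow_double_add by (rule meta_mp)
  show ?thesis
    by (rule pp_pow_dvd_mult_cancel[where n = 1, OF h0[unfolded e0], unfolded power_one_right]) simp
qed

lemma pp_dvd_of_residue_congruences:
  fixes \<zeta> u \<beta> \<gamma> \<beta>' \<gamma>' \<delta> :: "'p::prime_card padic"
  assumes odd: "odd CARD('p)" and nonsquare: "\<not> (\<exists>y. pp dvd y ^ 2 - (- \<zeta>))"
    and r2: "pp dvd 2*\<delta> - (\<beta>^2 - \<beta>'^2)"
    and r1: "pp dvd \<beta>*\<gamma> - \<beta>'*\<gamma>'"
    and r0: "pp dvd \<delta>*(pp*u + 2*\<zeta>) - (\<gamma>^2 - \<gamma>'^2)"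
  shows "pp dvd \<delta>"
proof -
  have residue_pp: "residue (pp :: 'p padic) = 0"
    by (simp add: residue_eq_0_iff)
  have "residue \<beta> ^ 2 = residue \<beta>' ^ 2"
  proof (rule sq_eq_sq_of_nonsquare)
    show "y ^ 2 + residue \<zeta> \<noteq> 0" for y
      by (rule residue_nonsquare[OF nonsquare])
    have "2 * residue \<delta> = residue \<beta> ^ 2 - residue \<beta>' ^ 2"
      "residue \<delta> * (2 * residue \<zeta>) = residue \<gamma> ^ 2 - residue \<gamma>' ^ 2"
      using r2 r0 unfolding residue_eq_0_iff[symmetric]
      by (simp_all add: hom_distribs residue_pp)
    then show "residue \<gamma> ^ 2 - residue \<gamma>' ^ 2 = residue \<zeta> * (residue \<beta> ^ 2 - residue \<beta>' ^ 2)"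
      by (metis mult.commute mult.left_commute)
    show "residue \<beta> * residue \<gamma> = residue \<beta>' * residue \<gamma>'"
      using r1 unfolding residue_eq_0_iff[symmetric] by (simp add: hom_distribs)
  qed
  then have "residue (2 * \<delta>) = 0"
    using r2 unfolding residue_eq_0_iff[symmetric] by (simp add: hom_distribs)
  then show "pp dvd \<delta>"
    unfolding residue_eq_0_iff by (rule pp_pow_dvd_two_mult_cancel[OF odd, where n = 1, unfolded power_one_right])
qed

lemma pp_pow_dvd_diff_of_coeff_congruences:
  fixes \<zeta> A B C A' B' C' :: "'p::prime_card padic"
  assumes odd: "odd CARD('p)" and nonsquare: "\<not> (\<exists>y. pp dvd y ^ 2 - (- \<zeta>))"
    and "pp ^ k dvd B" "pp ^ k dvd C" "pp ^ k dvd B'" "pp ^ k dvd C'"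
    and h0: "pp ^ (2*k+3) dvd ((pp*A + \<zeta>)^2 - pp^2*C^2) - ((pp*A' + \<zeta>)^2 - pp^2*C'^2)"
    and h1: "pp ^ (2*k+3) dvd pp^2*(2*C*B) - pp^2*(2*C'*B')"
    and h2: "pp ^ (2*k+3) dvd (2*(pp*A + \<zeta>) - pp^2*B^2) - (2*(pp*A' + \<zeta>) - pp^2*B'^2)"
  shows "pp ^ (2*k+2) dvd A - A'"
proof -
  obtain \<beta> \<gamma> \<beta>' \<gamma>' where B: "B = pp^k * \<beta>" and C: "C = pp^k * \<gamma>"
    and B': "B' = pp^k * \<beta>'" and C': "C' = pp^k * \<gamma>'"
    using assms(3-6) by (metis dvdE)
  obtain \<delta> where \<delta>: "A - A' = pp ^ (2*k+1) * \<delta>" and r2: "pp dvd 2*\<delta> - (\<beta>^2 - \<beta>'^2)"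
    using coeff2_congruenceE[OF odd h2[unfolded B B']] .
  have r1: "pp dvd \<beta>*\<gamma> - \<beta>'*\<gamma>'"
    using coeff1_congruence_imp[OF odd h1[unfolded B C B' C']] .
  have r0: "pp dvd \<delta>*(pp*(A + A') + 2*\<zeta>) - (\<gamma>^2 - \<gamma>'^2)"
    using coeff0_congruence_imp[OF \<delta> h0[unfolded C C']] .
  have "pp dvd \<delta>"
    using pp_dvd_of_residue_congruences[OF odd nonsquare r2 r1 r0] .
  moreover have "pp ^ (2*k+2) = pp ^ (2*k+1) * pp"
    by (simp add: power_add)
  ultimately show ?thesis
    unfolding \<delta> by (metis mult_dvd_mono dvd_refl)
qed

lemma power2_x2_plus_const: "[:u, 0, 1:] ^ 2 = [:u * u, 0, 2 * u, 0, 1 :: 'a::comm_ring_1:]"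
  by (simp add: power2_eq_square algebra_simps mult_2)

lemma coeff_power2_x2_plus_const_minus_smult_power2_linear:
  fixes u s c b :: "'a::comm_ring_1"
  defines "f \<equiv> [:u, 0, 1:] ^ 2 - smult s ([:c, b:] ^ 2)"
  shows "coeff f 0 = u ^ 2 - s * c ^ 2"
    and "coeff f 1 = - (s * (2 * c * b))"
    and "coeff f 2 = 2 * u - s * b ^ 2"
proof -
  have "[:c, b:] ^ 2 = [:c * c, 2 * c * b, b * b:]"
    by (simp add: power2_eq_square algebra_simps mult_2)
  then show "coeff f 0 = u ^ 2 - s * c ^ 2" "coeff f 1 = - (s * (2 * c * b))"
    "coeff f 2 = 2 * u - s * b ^ 2"
    unfolding f_def power2_x2_plus_const by (simp_all add: power2_eq_square numeral_2_eq_2)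
qed

lemma diff_dvd_coeff_power2_x2_plus_const:
  fixes u u' :: "'a::comm_ring_1"
  shows "u - u' dvd coeff ([:u, 0, 1:] ^ 2) i - coeff ([:u', 0, 1:] ^ 2) i"
proof -
  have "[:u, 0, 1:] ^ 2 - [:u', 0, 1:] ^ 2 = smult (u - u') [:u + u', 0, 2:]"
    by (simp add: power2_eq_square algebra_simps)
  then have "coeff ([:u, 0, 1:] ^ 2) i - coeff ([:u', 0, 1:] ^ 2) i = (u - u') * coeff [:u + u', 0, 2:] i"
    by (metis coeff_diff coeff_smult)
  then show ?thesis
    by simp
qed

theorem claim2:
  fixes \<zeta> A B C A' B' C' :: "'p::prime_card padic" and k :: nat
  assumes "odd CARD('p)"
    and "\<not> (\<exists>y. pp dvd (y ^ 2 - (- \<zeta>)))"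
    and "pp ^ k dvd B" and "pp ^ k dvd C" and "pp ^ k dvd B'" and "pp ^ k dvd C'"
    and "\<forall>i. pp ^ (2 * k + 3) dvd
           (coeff ([:pp * A + \<zeta>, 0, 1:] ^ 2 - smult (pp ^ 2) ([:C, B:] ^ 2)) i
          - coeff ([:pp * A' + \<zeta>, 0, 1:] ^ 2 - smult (pp ^ 2) ([:C', B':] ^ 2)) i)"
  shows "pp ^ (2 * k + 2) dvd (A - A')
    \<and> (\<forall>i. pp ^ (2 * k + 3) dvd
           (coeff ([:pp * A + \<zeta>, 0, 1:] ^ 2) i - coeff ([:pp * A' + \<zeta>, 0, 1:] ^ 2) i))"
proof
  have coeff_cong: "pp ^ (2 * k + 3) dvd
      coeff ([:pp * A + \<zeta>, 0, 1:] ^ 2 - smult (pp ^ 2) ([:C, B:] ^ 2)) i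
      - coeff ([:pp * A' + \<zeta>, 0, 1:] ^ 2 - smult (pp ^ 2) ([:C', B':] ^ 2)) i" for i
    using assms(7) by blast
  note coeff_cong = coeff_cong[of 0] coeff_cong[of 1] coeff_cong[of 2]
  note coeff_cong = coeff_cong[unfolded coeff_power2_x2_plus_const_minus_smult_power2_linear]
  have h1: "pp ^ (2*k+3) dvd pp^2*(2*C*B) - pp^2*(2*C'*B')"
    using coeff_cong(2) unfolding minus_diff_minus dvd_minus_iff .
  show A: "pp ^ (2 * k + 2) dvd A - A'"
    by (rule pp_pow_dvd_diff_of_coeff_congruences[OF assms(1-6) coeff_cong(1) h1 coeff_cong(3)])
  have "pp * A + \<zeta> - (pp * A' + \<zeta>) = pp * (A - A')"
    by (simp add: algebra_simps)
  moreover have "pp ^ (2 * k + 3) = pp * pp ^ (2 * k + 2)"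
    by (simp add: numeral_3_eq_3 numeral_2_eq_2)
  ultimately have "pp ^ (2 * k + 3) dvd pp * A + \<zeta> - (pp * A' + \<zeta>)"
    using A by (metis mult_dvd_mono dvd_refl)
  then show "\<forall>i. pp ^ (2 * k + 3) dvd
           (coeff ([:pp * A + \<zeta>, 0, 1:] ^ 2) i - coeff ([:pp * A' + \<zeta>, 0, 1:] ^ 2) i)"
    using diff_dvd_coeff_power2_x2_plus_const dvd_trans by blast
qed

end
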